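(* Let two probabilistically equivalent models (each one of the linear dynamic models described in the context) be written in stacked form as $$T_1x=v,\qquad T_2y=w,$$ where $x,y$ are zero-mean nonsingular Gaussian sequences over $[0,N]$, $T_1,T_2$ are nonsingular matrices determined by the model parameters, and $v,w$ are the zero-mean Gaussian vectors of dynamic noise and boundary values with nonsingular covariances $\mathrm{Cov}(v)=P_1$, $\mathrm{Cov}(w)=P_2$. Then the two models are algebraically equivalent if and only if $$T_2'P_2^{-1}w=T_1'P_1^{-1}v .$$
   Context: Sequences are indexed by $[0,N]=(0,1,\ldots,N)$, $x_k\in\mathbb{R}^d$, $'$ denotes transpose. The models considered are linear dynamic models of the following types: forward/backward Markov, reciprocal, and forward/backward $CM_L$ and $CM_F$ models; each such model with its boundary condition can be written as $Tx=v$ with $T$ nonsingular and $v$ stacking the dynamic noise and boundary values. Two models are probabilistically equivalent (PE) if $x$ and $y$ have the same distribution, and algebraically equivalent (AE) if $x=y$ path-wise. *)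

theory Defs
  imports "HOL-Probability.Probability"
begin

text \<open>A (jointly) Gaussian random vector: measurable, and every linear functional
  of it is either almost surely constant (degenerate Gaussian) or normally distributed.\<close>
definition gaussian_vec :: "'a measure \<Rightarrow> ('a \<Rightarrow> real^'n) \<Rightarrow> bool" where
  "gaussian_vec M X \<longleftrightarrow> X \<in> borel_measurable M \<and>
     (\<forall>a::real^'n. (\<exists>c. AE \<omega> in M. a \<bullet> X \<omega> = c) \<or>
        (\<exists>\<mu> \<sigma>. \<sigma> > 0 \<and> distributed M lborel (\<lambda>\<omega>. a \<bullet> X \<omega>) (\<lambda>t. ennreal (normal_density \<mu> \<sigma> t))))"

definition zero_mean :: "'a measure \<Rightarrow> ('a \<Rightarrow> real^'n) \<Rightarrow> bool" where
  "zero_mean M X \<longleftrightarrow> (\<forall>i. integral\<^sup>L M (\<lambda>\<omega>. X \<omega> $ i) = 0)"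

definition cov_mat :: "'a measure \<Rightarrow> ('a \<Rightarrow> real^'n) \<Rightarrow> real^'n^'n" where
  "cov_mat M X = (\<chi> i j. integral\<^sup>L M (\<lambda>\<omega>.
      (X \<omega> $ i - integral\<^sup>L M (\<lambda>\<eta>. X \<eta> $ i)) * (X \<omega> $ j - integral\<^sup>L M (\<lambda>\<eta>. X \<eta> $ j))))"

definition zm_nonsing_gaussian :: "'a measure \<Rightarrow> ('a \<Rightarrow> real^'n) \<Rightarrow> bool" where
  "zm_nonsing_gaussian M X \<longleftrightarrow> gaussian_vec M X \<and> zero_mean M X \<and> invertible (cov_mat M X)"

definition prob_equiv :: "'a measure \<Rightarrow> ('a \<Rightarrow> real^'n) \<Rightarrow> ('a \<Rightarrow> real^'n) \<Rightarrow> bool" where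
  "prob_equiv M X Y \<longleftrightarrow> distr M borel X = distr M borel Y"

definition alg_equiv :: "'a measure \<Rightarrow> ('a \<Rightarrow> real^'n) \<Rightarrow> ('a \<Rightarrow> real^'n) \<Rightarrow> bool" where
  "alg_equiv M X Y \<longleftrightarrow> (\<forall>\<omega>\<in>space M. X \<omega> = Y \<omega>)"

end

theory Submission
  imports Defs
begin

text \<open>Both stacked models are linear images of the same covariance: \<open>Cov(v) = T\<^sub>1 C T\<^sub>1'\<close>
  and \<open>Cov(w) = T\<^sub>2 C T\<^sub>2'\<close>, where \<open>C = Cov(x) = Cov(y)\<close> by probabilistic equivalence.
  Hence \<open>T\<^sub>1' P\<^sub>1\<^sup>-\<^sup>1 T\<^sub>1 = C\<^sup>-\<^sup>1 = T\<^sub>2' P\<^sub>2\<^sup>-\<^sup>1 T\<^sub>2\<close>, so \<open>T\<^sub>1' P\<^sub>1\<^sup>-\<^sup>1 v = C\<^sup>-\<^sup>1 x\<close> and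
  \<open>T\<^sub>2' P\<^sub>2\<^sup>-\<^sup>1 w = C\<^sup>-\<^sup>1 y\<close>, and these agree exactly when \<open>x = y\<close>.\<close>

lemma matrix_inv_right:
  fixes A :: "'a::semiring_1^'n^'n"
  assumes "invertible A"
  shows "A ** matrix_inv A = mat 1"
  using someI_ex[OF assms[unfolded invertible_def]] by (simp add: matrix_inv_def)

lemma matrix_inv_left:
  fixes A :: "'a::semiring_1^'n^'n"
  assumes "invertible A"
  shows "matrix_inv A ** A = mat 1"
  using someI_ex[OF assms[unfolded invertible_def]] by (simp add: matrix_inv_def)

lemma invertible_matrix_inv:
  fixes A :: "'a::semiring_1^'n^'n"
  assumes "invertible A"
  shows "invertible (matrix_inv A)"
  using matrix_inv_left[OF assms] matrix_inv_right[OF assms] invertible_def by blast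

lemma matrix_inv_unique_left:
  fixes A B :: "'a::semiring_1^'n^'n"
  assumes "invertible B" and "A ** B = mat 1"
  shows "A = matrix_inv B"
proof -
  have "A = A ** (B ** matrix_inv B)" using matrix_inv_right[OF assms(1)] by simp
  also have "\<dots> = matrix_inv B" using assms(2) by (simp add: matrix_mul_assoc)
  finally show ?thesis .
qed

lemma matrix_inv_congruence:
  fixes T C :: "real^'n^'n"
  assumes T: "invertible T" and C: "invertible C"
  shows "transpose T ** matrix_inv (T ** C ** transpose T) ** T = matrix_inv C"
proof -
  define P where "P = T ** C ** transpose T"
  define R where "R = matrix_inv (transpose T)"
  have TR: "transpose T ** R = mat 1"
    unfolding R_def by (rule matrix_inv_right[OF transpose_invertible[OF T]])
  have P: "invertible P"
    unfolding P_def by (intro invertible_mult T C transpose_invertible)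
  have "T ** C = P ** R"
    unfolding P_def by (metis TR matrix_mul_assoc matrix_mul_rid)
  then have "transpose T ** matrix_inv P ** T ** C = transpose T ** (matrix_inv P ** P) ** R"
    by (simp add: matrix_mul_assoc[symmetric])
  then have "transpose T ** matrix_inv P ** T ** C = mat 1"
    using TR matrix_inv_left[OF P] by simp
  then show ?thesis
    unfolding P_def[symmetric] by (rule matrix_inv_unique_left[OF C])
qed

lemma integrable_normal_square:
  assumes "0 < \<sigma>"
  shows "integrable lborel (\<lambda>t. normal_density \<mu> \<sigma> t * t\<^sup>2)"
proof -
  have "integrable lborel (\<lambda>t. normal_density \<mu> \<sigma> t * (t - \<mu>)\<^sup>2
      + 2 * \<mu> * (normal_density \<mu> \<sigma> t * (t - \<mu>) ^ 1) + \<mu>\<^sup>2 * normal_density \<mu> \<sigma> t)"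
    using assms by (intro Bochner_Integration.integrable_add Bochner_Integration.integrable_mult_right
        integrable_normal_moment integrable_normal_density)
  also have "(\<lambda>t. normal_density \<mu> \<sigma> t * (t - \<mu>)\<^sup>2
      + 2 * \<mu> * (normal_density \<mu> \<sigma> t * (t - \<mu>) ^ 1) + \<mu>\<^sup>2 * normal_density \<mu> \<sigma> t)
      = (\<lambda>t. normal_density \<mu> \<sigma> t * t\<^sup>2)"
    by (simp add: power2_eq_square algebra_simps)
  finally show ?thesis .
qed

lemma (in prob_space) gaussian_vec_square_integrable:
  assumes G: "gaussian_vec M X"
  shows "integrable M (\<lambda>\<omega>. (X \<omega> $ i)\<^sup>2)"
proof -
  have "X \<in> borel_measurable M"
    using G by (simp add: gaussian_vec_def)
  then have [measurable]: "(\<lambda>\<omega>. X \<omega> $ i) \<in> borel_measurable M"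
    by (rule measurable_compose[OF _ borel_measurable_nth])
  have "(\<lambda>\<omega>. axis i 1 \<bullet> X \<omega>) = (\<lambda>\<omega>. X \<omega> $ i)"
    by (simp add: cart_eq_inner_axis inner_commute)
  moreover have "(\<exists>c. AE \<omega> in M. axis i 1 \<bullet> X \<omega> = c) \<or>
      (\<exists>\<mu> \<sigma>. 0 < \<sigma> \<and> distributed M lborel (\<lambda>\<omega>. axis i 1 \<bullet> X \<omega>)
        (\<lambda>t. ennreal (normal_density \<mu> \<sigma> t)))"
    using G unfolding gaussian_vec_def by blast
  ultimately consider c where "AE \<omega> in M. X \<omega> $ i = c"
    | \<mu> \<sigma> where "0 < \<sigma>"
        "distributed M lborel (\<lambda>\<omega>. X \<omega> $ i) (\<lambda>t. ennreal (normal_density \<mu> \<sigma> t))"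
    by (metis (no_types))
  then show ?thesis
  proof cases
    case (1 c)
    then have "AE \<omega> in M. c\<^sup>2 = (X \<omega> $ i)\<^sup>2" by eventually_elim simp
    then show ?thesis
      by (rule integrable_cong_AE_imp[rotated 2]) simp_all
  next
    case (2 \<mu> \<sigma>)
    then show ?thesis
      using distributed_integrable[OF 2(2), of "\<lambda>t. t\<^sup>2"] integrable_normal_square by simp
  qed
qed

lemma integrable_mult_of_square_integrable:
  fixes f g :: "'a \<Rightarrow> real"
  assumes [measurable]: "f \<in> borel_measurable M" "g \<in> borel_measurable M"
    and "integrable M (\<lambda>x. (f x)\<^sup>2)" "integrable M (\<lambda>x. (g x)\<^sup>2)"
  shows "integrable M (\<lambda>x. f x * g x)"
proof (rule Bochner_Integration.integrable_bound)
  show "integrable M (\<lambda>x. (f x)\<^sup>2 + (g x)\<^sup>2)"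
    using assms(3,4) by (rule Bochner_Integration.integrable_add)
  show "AE x in M. norm (f x * g x) \<le> norm ((f x)\<^sup>2 + (g x)\<^sup>2)"
  proof (intro AE_I2)
    fix x
    have "2 * (\<bar>f x\<bar> * \<bar>g x\<bar>) \<le> (f x)\<^sup>2 + (g x)\<^sup>2"
      using sum_squares_bound[of "\<bar>f x\<bar>" "\<bar>g x\<bar>"] by (simp add: mult.assoc)
    moreover have "0 \<le> \<bar>f x\<bar> * \<bar>g x\<bar>" by simp
    ultimately have "\<bar>f x\<bar> * \<bar>g x\<bar> \<le> (f x)\<^sup>2 + (g x)\<^sup>2" by linarith
    then show "norm (f x * g x) \<le> norm ((f x)\<^sup>2 + (g x)\<^sup>2)"
      by (simp add: abs_mult)
  qed
qed measurable

lemma (in prob_space) gaussian_vec_integrable_mult: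
  assumes G: "gaussian_vec M X"
  shows "integrable M (\<lambda>\<omega>. X \<omega> $ k * X \<omega> $ l)"
proof (rule integrable_mult_of_square_integrable)
  have "X \<in> borel_measurable M"
    using G by (simp add: gaussian_vec_def)
  then show "(\<lambda>\<omega>. X \<omega> $ k) \<in> borel_measurable M" "(\<lambda>\<omega>. X \<omega> $ l) \<in> borel_measurable M"
    by (auto intro: measurable_compose[OF _ borel_measurable_nth])
qed (use G gaussian_vec_square_integrable in auto)

lemma cov_mat_zero_mean:
  assumes "zero_mean M X"
  shows "cov_mat M X = (\<chi> i j. integral\<^sup>L M (\<lambda>\<omega>. X \<omega> $ i * X \<omega> $ j))"
  using assms by (simp add: cov_mat_def zero_mean_def)

lemma cov_mat_linear_image:
  fixes X :: "'a \<Rightarrow> real^'n" and V :: "'a \<Rightarrow> real^'m" and A :: "real^'n^'m"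
  assumes "zero_mean M X" and "zero_mean M V"
    and int: "\<And>k l. integrable M (\<lambda>\<omega>. X \<omega> $ k * X \<omega> $ l)"
    and V: "\<forall>\<omega>\<in>space M. A *v X \<omega> = V \<omega>"
  shows "cov_mat M V = A ** cov_mat M X ** transpose A"
proof -
  have "integral\<^sup>L M (\<lambda>\<omega>. V \<omega> $ i * V \<omega> $ j)
      = integral\<^sup>L M (\<lambda>\<omega>. \<Sum>l\<in>UNIV. (\<Sum>k\<in>UNIV. A $ i $ k * (X \<omega> $ k * X \<omega> $ l)) * A $ j $ l)"
    for i j
  proof (rule Bochner_Integration.integral_cong[OF refl])
    fix \<omega> assume "\<omega> \<in> space M"
    then have "V \<omega> = A *v X \<omega>" using V by simp
    then show "V \<omega> $ i * V \<omega> $ j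
        = (\<Sum>l\<in>UNIV. (\<Sum>k\<in>UNIV. A $ i $ k * (X \<omega> $ k * X \<omega> $ l)) * A $ j $ l)"
      by (simp add: matrix_vector_mult_def sum_distrib_left sum_distrib_right algebra_simps)
  qed
  also have "\<dots> i j = (\<Sum>l\<in>UNIV. (\<Sum>k\<in>UNIV. A $ i $ k * integral\<^sup>L M (\<lambda>\<omega>. X \<omega> $ k * X \<omega> $ l)) * A $ j $ l)"
    for i j
    using int by (simp add: Bochner_Integration.integral_sum Bochner_Integration.integrable_sum)
  finally show ?thesis
    using assms(1,2)
    by (simp add: cov_mat_zero_mean vec_eq_iff matrix_matrix_mult_def transpose_def)
qed

lemma cov_mat_eq_if_distr_eq:
  fixes X Y :: "'a \<Rightarrow> real^'n"
  assumes [measurable]: "X \<in> borel_measurable M" "Y \<in> borel_measurable M"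
    and D: "distr M borel X = distr M borel Y"
  shows "cov_mat M X = cov_mat M Y"
proof -
  have transfer: "integral\<^sup>L M (\<lambda>\<omega>. f (X \<omega>)) = integral\<^sup>L M (\<lambda>\<omega>. f (Y \<omega>))"
    if [measurable]: "f \<in> borel_measurable borel" for f :: "real^'n \<Rightarrow> real"
    using integral_distr[of X M borel f] integral_distr[of Y M borel f] D by simp
  show ?thesis
    unfolding cov_mat_def
    by (simp add: transfer[of "\<lambda>z. z $ _"] transfer[of "\<lambda>z. (z $ _ - _) * (z $ _ - _)"])
qed

lemma (in prob_space) stacked_model_transpose_inv_cov:
  fixes x v :: "'a \<Rightarrow> real^'n" and T :: "real^'n^'n"
  assumes x: "zm_nonsing_gaussian M x" and T: "invertible T"
    and model: "\<forall>\<omega>\<in>space M. T *v x \<omega> = v \<omega>" and v: "zero_mean M v"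
  shows "\<forall>\<omega>\<in>space M. transpose T *v (matrix_inv (cov_mat M v) *v v \<omega>)
    = matrix_inv (cov_mat M x) *v x \<omega>"
proof -
  have G: "gaussian_vec M x" and Z: "zero_mean M x" and C: "invertible (cov_mat M x)"
    using x by (simp_all add: zm_nonsing_gaussian_def)
  have "cov_mat M v = T ** cov_mat M x ** transpose T"
    using cov_mat_linear_image[OF Z v gaussian_vec_integrable_mult[OF G] model] .
  then have K: "transpose T ** matrix_inv (cov_mat M v) ** T = matrix_inv (cov_mat M x)"
    using matrix_inv_congruence[OF T C] by simp
  show ?thesis
  proof
    fix \<omega> assume "\<omega> \<in> space M"
    then have "v \<omega> = T *v x \<omega>"
      using model by simp
    then have "transpose T *v (matrix_inv (cov_mat M v) *v v \<omega>)
        = (transpose T ** matrix_inv (cov_mat M v) ** T) *v x \<omega>"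
      by (simp add: matrix_vector_mul_assoc matrix_mul_assoc)
    then show "transpose T *v (matrix_inv (cov_mat M v) *v v \<omega>) = matrix_inv (cov_mat M x) *v x \<omega>"
      by (simp only: K)
  qed
qed

theorem theorem1:
  fixes M :: "'a measure"
    and x y v w :: "'a \<Rightarrow> real^'n"
    and T1 T2 P1 P2 :: "real^'n^'n"
  assumes "prob_space M"
    and "zm_nonsing_gaussian M x" and "zm_nonsing_gaussian M y"
    and "invertible T1" and "invertible T2"
    and "\<forall>\<omega>\<in>space M. T1 *v x \<omega> = v \<omega>"
    and "\<forall>\<omega>\<in>space M. T2 *v y \<omega> = w \<omega>"
    and "zm_nonsing_gaussian M v" and "zm_nonsing_gaussian M w"
    and "cov_mat M v = P1" and "cov_mat M w = P2"
    and "invertible P1" and "invertible P2"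
    and "prob_equiv M x y"
  shows "alg_equiv M x y \<longleftrightarrow>
    (\<forall>\<omega>\<in>space M. transpose T2 *v (matrix_inv P2 *v w \<omega>)
                 = transpose T1 *v (matrix_inv P1 *v v \<omega>))"
proof -
  interpret prob_space M by fact
  let ?C = "cov_mat M x"
  have "cov_mat M y = ?C"
    using assms(2,3,14) cov_mat_eq_if_distr_eq[of y M x]
    by (simp add: zm_nonsing_gaussian_def gaussian_vec_def prob_equiv_def)
  then have "\<forall>\<omega>\<in>space M. transpose T2 *v (matrix_inv P2 *v w \<omega>) = matrix_inv ?C *v y \<omega>"
    using stacked_model_transpose_inv_cov[OF assms(3,5,7)] assms(9,11)
    by (simp add: zm_nonsing_gaussian_def)
  moreover have "\<forall>\<omega>\<in>space M. transpose T1 *v (matrix_inv P1 *v v \<omega>) = matrix_inv ?C *v x \<omega>"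
    using stacked_model_transpose_inv_cov[OF assms(2,4,6)] assms(8,10)
    by (simp add: zm_nonsing_gaussian_def)
  moreover have "inj ((*v) (matrix_inv ?C))"
    using assms(2) by (intro inj_matrix_vector_mult invertible_matrix_inv) (simp add: zm_nonsing_gaussian_def)
  ultimately show ?thesis
    unfolding alg_equiv_def by (auto dest: injD)
qed

end
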